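(* For every positive integer $T$ divisible by $4$, \[\sum_{t=1}^{T/4}\big(T-4(t-1)\big)\binom{T+1}{2t-1}=2^{T-1}+\frac T2\binom{T}{T/2}.\] *)

theory Defs
  imports Main
begin

end

theory Submission
  imports Defs "HOL.Binomial_Plus"
begin

text \<open>
  Write \<open>T = 4m\<close>. By the two absorption identities for \<open>T+1 choose k+1\<close>, each summand
  \<open>(T - 2k) (T+1 choose k+1)\<close> with \<open>k = 2(t-1)\<close> equals
  \<open>(T choose k) + (T choose k+1) + (T+1)((T choose k+1) - (T choose k))\<close>.
  Summed over \<open>t\<close>, the first parts cover row \<open>T\<close> of Pascal's triangle strictly below the
  middle, which by symmetry is \<open>2^(T-1) - (T choose 2m)/2\<close>, while the alternating parts
  telescope by Pascal's rule to \<open>T-1 choose 2m-1\<close>, which is \<open>(T choose 2m)/2\<close>.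
\<close>

lemma Suc_choose_weighted_eq:
  fixes n k :: nat
  shows "(int n - 2 * int k) * int (Suc n choose Suc k)
    = int (n choose k) + int (n choose Suc k) + (int n + 1) * (int (n choose Suc k) - int (n choose k))"
proof (cases "k \<le> n")
  case True
  have lower: "(int k + 1) * int (Suc n choose Suc k) = (int n + 1) * int (n choose k)"
    using arg_cong[OF Suc_times_binomial[of k n], of int] by (simp add: algebra_simps)
  have "int ((n - k) * (Suc n choose Suc k)) = int (Suc n * (n choose Suc k))"
    using binomial_absorb_comp[of "Suc n" "Suc k"] by (simp del: binomial_Suc_Suc)
  then have upper: "(int n - int k) * int (Suc n choose Suc k) = (int n + 1) * int (n choose Suc k)"
    using True by (simp del: binomial_Suc_Suc add: algebra_simps)
  have "(int n - 2 * int k) * int (Suc n choose Suc k)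
      = (int n - int k) * int (Suc n choose Suc k) - (int k + 1) * int (Suc n choose Suc k)
        + int (Suc n choose Suc k)"
    by (simp add: algebra_simps)
  also have "\<dots> = (int n + 1) * (int (n choose Suc k) - int (n choose k))
        + int (n choose k) + int (n choose Suc k)"
    unfolding upper lower by (simp add: algebra_simps)
  finally show ?thesis by simp
next
  case False
  then show ?thesis by (simp del: binomial_Suc_Suc add: binomial_eq_0)
qed

lemma sum_alternating_choose_pairs:
  fixes p m :: nat
  shows "(\<Sum>s\<le>m. int (Suc p choose Suc (2*s)) - int (Suc p choose (2*s))) = int (p choose Suc (2*m))"
  by (induction m) (simp_all add: numeral_eq_Suc)

lemma sum_choose_below_middle:
  fixes k :: nat
  shows "2 * (\<Sum>j<k. 2*k choose j) + (2*k choose k) = 2 ^ (2*k)"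
proof -
  have upper_half: "(\<Sum>j\<in>{k<..2*k}. 2*k choose j) = (\<Sum>j<k. 2*k choose j)"
    by (rule sum.reindex_bij_witness[of _ "\<lambda>j. 2*k - j" "\<lambda>j. 2*k - j"])
       (auto simp: binomial_symmetric[symmetric])
  have "(\<Sum>j\<in>{..<k} \<union> {k<..2*k}. 2*k choose j)
      = (\<Sum>j<k. 2*k choose j) + (\<Sum>j\<in>{k<..2*k}. 2*k choose j)"
    by (rule sum.union_disjoint) auto
  moreover have "{..2*k} = insert k ({..<k} \<union> {k<..2*k})" by auto
  ultimately have "(\<Sum>j\<le>2*k. 2*k choose j)
      = (\<Sum>j<k. 2*k choose j) + (2*k choose k) + (\<Sum>j\<in>{k<..2*k}. 2*k choose j)"
    by simp
  then show ?thesis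
    using choose_row_sum[of "2*k"] upper_half by simp
qed

lemma central_binomial_Suc:
  fixes k :: nat
  shows "Suc (Suc (2*k)) choose Suc k = 2 * (Suc (2*k) choose k)"
  using central_binomial_odd[of "Suc (2*k)"] by simp

lemma sum_weighted_choose_odd:
  fixes p k :: nat
  shows "(\<Sum>s\<le>k. (int (Suc p) - 4 * int s) * int (Suc (Suc p) choose Suc (2*s)))
    = (\<Sum>j<2 * Suc k. int (Suc p choose j)) + int (Suc (Suc p)) * int (p choose Suc (2*k))"
proof -
  have summand: "(int (Suc p) - 4 * int s) * int (Suc (Suc p) choose Suc (2*s))
      = int (Suc p choose (2*s)) + int (Suc p choose Suc (2*s))
        + int (Suc (Suc p)) * (int (Suc p choose Suc (2*s)) - int (Suc p choose (2*s)))" for s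
    using Suc_choose_weighted_eq[of "Suc p" "2*s"] by (simp del: binomial_Suc_Suc)
  show ?thesis
    using sum.in_pairs_0[of "\<lambda>j. int (Suc p choose j)" k]
    unfolding summand sum.distrib sum_distrib_left[symmetric] sum_alternating_choose_pairs
    by (simp del: binomial_Suc_Suc add: lessThan_Suc_atMost sum.distrib)
qed

theorem lemma8:
  fixes T :: nat
  assumes "T > 0" and "4 dvd T"
  shows "(\<Sum>t=1..T div 4. (int T - 4 * (int t - 1)) * int ((T + 1) choose (2 * t - 1)))
         = 2 ^ (T - 1) + int (T div 2) * int (T choose (T div 2))"
proof -
  obtain k where "T = 4 * Suc k"
  proof -
    obtain m where "T = 4 * m" using assms(2) ..
    with assms(1) show ?thesis by (cases m) (auto intro: that)
  qed
  define h where "h = 2 * Suc k"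
  define c where "c = T - 1 choose Suc (2*k)"
  have T_Suc_Suc: "T = Suc (Suc (2 * Suc (2*k)))" and Suc_T_pred: "Suc (T - 1) = T"
    and T_double: "T = 2 * h" and T_div_2: "T div 2 = h" and T_div_4: "T div 4 = Suc k"
    using \<open>T = 4 * Suc k\<close> by (simp_all add: h_def)
  have "(\<Sum>t=1..T div 4. (int T - 4 * (int t - 1)) * int ((T + 1) choose (2 * t - 1)))
      = (\<Sum>s\<le>k. (int T - 4 * int s) * int (Suc T choose Suc (2*s)))"
    unfolding T_div_4 One_nat_def sum.atLeast_Suc_atMost_Suc_shift atLeast0AtMost
    by (simp add: algebra_simps)
  also have "\<dots> = (\<Sum>j<h. int (T choose j)) + int (Suc T) * int c"
    unfolding h_def c_def by (rule sum_weighted_choose_odd[of "T - 1" k, unfolded Suc_T_pred])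
  finally have lhs: "(\<Sum>t=1..T div 4. (int T - 4 * (int t - 1)) * int ((T + 1) choose (2 * t - 1)))
      = (\<Sum>j<h. int (T choose j)) + int (Suc T) * int c" .
  have middle: "T choose h = 2 * c"
    using central_binomial_Suc[of "Suc (2*k)"] unfolding c_def h_def T_Suc_Suc by simp
  have "2 * (\<Sum>j<h. T choose j) + (T choose h) = 2 ^ T"
    using sum_choose_below_middle[of h] by (simp only: T_double)
  then have "2 * (\<Sum>j<h. int (T choose j)) + 2 * int c = 2 ^ T"
    unfolding middle by (metis of_nat_add of_nat_mult of_nat_numeral of_nat_power of_nat_sum)
  moreover have "(2::int) ^ T = 2 * 2 ^ (T - 1)"
    by (metis Suc_T_pred power_Suc)
  ultimately show ?thesis
    unfolding lhs T_div_2 middle using T_double by (simp add: algebra_simps)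
qed

end
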